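(* Let $n\ge d$, $L=\{\ell_1,\dots,\ell_n\}$, $R=\{r_1,\dots,r_d\}$. For a linkage $(n,d)$-matching field $\mathcal{M}$ on $L\sqcup R$ let $\varphi_{\mathcal{M}}\colon\binom{L}{n-d+1}\to\{v\in\mathbb{Z}_{\ge0}^d:\sum_i v_i=n-d+1\}$ send $\rho$ to the right degree vector of the Chow covector $\Omega_\rho$ of $\mathcal{M}$. If $\mathcal{M}$ and $\mathcal{M}'$ are linkage $(n,d)$-matching fields on $L\sqcup R$ with $\varphi_{\mathcal{M}}=\varphi_{\mathcal{M}'}$, then $\mathcal{M}=\mathcal{M}'$. That is, a linkage matching field is uniquely determined by its map $\varphi_{\mathcal{M}}$.
   Context: All graphs are bipartite graphs on $L\sqcup R$, identified with their edge sets; the right degree vector is $(\deg r_1,\dots,\deg r_d)$. An $(n,d)$-matching field $\mathcal{M}=(M_\sigma)$ assigns to each $d$-subset $\sigma\subseteq L$ a perfect matching $M_\sigma$ between $\sigma$ and $R$. It is linkage if for every $r_i\in R$ and every $(d+1)$-subset $\tau\subseteq L$ there exist distinct $\ell_j,\ell_{j'}\in\tau$ such that $M_{\tau\setminus\{\ell_j\}}$ and $M_{\tau\setminus\{\ell_{j'}\}}$ agree everywhere except on the edges incident with $r_i$. For an $(n-d+1)$-subset $\rho\subseteq L$, the Chow covector $\Omega_\rho$ is the graph with edges $(\ell_j,r)$ for $\ell_j\in\rho$, where $r$ is the node matched to $\ell_j$ in $M_{(L\setminus\rho)\cup\{\ell_j\}}$. *)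

theory Defs
  imports Main
begin

text \<open>Left nodes are L = {0..<n} (standing for l_1..l_n), right nodes are R = {0..<d}
(standing for r_1..r_d).
A matching field assigns to each set sigma an edge set; only its values on
d-subsets of L matter.\<close>

type_synonym graph = "(nat \<times> nat) set"
type_synonym matching_field = "nat set \<Rightarrow> graph"

definition perfect_matching :: "nat set \<Rightarrow> nat set \<Rightarrow> graph \<Rightarrow> bool" where
  "perfect_matching S T E \<longleftrightarrow>
     E \<subseteq> S \<times> T \<and>
     (\<forall>l\<in>S. \<exists>!r. (l, r) \<in> E) \<and>
     (\<forall>r\<in>T. \<exists>!l. (l, r) \<in> E)"

definition matching_field :: "nat \<Rightarrow> nat \<Rightarrow> matching_field \<Rightarrow> bool" where
  "matching_field n d M \<longleftrightarrow>
     (\<forall>\<sigma>. \<sigma> \<subseteq> {0..<n} \<and> card \<sigma> = d \<longrightarrow> perfect_matching \<sigma> {0..<d} (M \<sigma>))"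

definition away_from :: "nat \<Rightarrow> graph \<Rightarrow> graph" where
  "away_from r E = {e \<in> E. snd e \<noteq> r}"

definition linkage :: "nat \<Rightarrow> nat \<Rightarrow> matching_field \<Rightarrow> bool" where
  "linkage n d M \<longleftrightarrow> matching_field n d M \<and>
     (\<forall>r\<in>{0..<d}. \<forall>\<tau>. \<tau> \<subseteq> {0..<n} \<and> card \<tau> = d + 1 \<longrightarrow>
        (\<exists>j\<in>\<tau>. \<exists>j'\<in>\<tau>. j \<noteq> j' \<and>
           away_from r (M (\<tau> - {j})) = away_from r (M (\<tau> - {j'}))))"

definition chow_covector :: "nat \<Rightarrow> matching_field \<Rightarrow> nat set \<Rightarrow> graph" where
  "chow_covector n M \<rho> = {(l, r). l \<in> \<rho> \<and> (l, r) \<in> M (({0..<n} - \<rho>) \<union> {l})}"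

definition right_degree_vector :: "nat \<Rightarrow> graph \<Rightarrow> nat list" where
  "right_degree_vector d E = map (\<lambda>r. card {l. (l, r) \<in> E}) [0..<d]"

definition phi :: "nat \<Rightarrow> nat \<Rightarrow> matching_field \<Rightarrow> nat set \<Rightarrow> nat list" where
  "phi n d M \<rho> = right_degree_vector d (chow_covector n M \<rho>)"

end

theory Submission
  imports Defs
begin

text \<open>Fix a (d+1)-set \<tau> and let P j be the matching of \<tau> - {j}. For each right node r the
linkage axiom gives a pair a \<noteq> b whose matchings differ only at r; these linked pairs form a
graph on \<tau> whose edges carry the d labels. Seen from a vertex i of a component C, the vertices
outside C get distinct labels in P i, none of which labels an edge inside C; so every component
carries fewer labels than vertices, and since all d labels occur on d + 1 vertices the graph is
connected. Walking from i towards j, the label of i in P j only changes at the first edge, so it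
labels a linked pair at i. This gives an exchange property: if k is matched to r in P x and x to r
in P k', then x is matched to r in P k. Hence if k is matched to r in M \<sigma>, column r of the Chow
covector of (L - \<sigma>) \<union> {k} strictly contains that of (L - \<sigma>) \<union> {k'} for every other
k' \<in> \<sigma>, so the degree vectors determine which node of \<sigma> is matched to r.\<close>

definition matched :: "graph \<Rightarrow> nat \<Rightarrow> nat" where
  "matched E l = (THE r. (l, r) \<in> E)"

lemma perfect_matching_edge:
  "perfect_matching S T E \<Longrightarrow> (l, r) \<in> E \<Longrightarrow> l \<in> S \<and> r \<in> T"
  unfolding perfect_matching_def by auto

lemma perfect_matching_left_unique:
  assumes "perfect_matching S T E" "(l, r) \<in> E" "(l, r') \<in> E"
  shows "r = r'"
  using assms unfolding perfect_matching_def by blast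

lemma perfect_matching_right_unique:
  assumes "perfect_matching S T E" "(l, r) \<in> E" "(l', r) \<in> E"
  shows "l = l'"
  using assms unfolding perfect_matching_def by blast

lemma perfect_matching_matched_eq:
  assumes "perfect_matching S T E" "(l, r) \<in> E"
  shows "matched E l = r"
  unfolding matched_def using assms perfect_matching_left_unique by blast

lemma perfect_matching_matched:
  assumes "perfect_matching S T E" "l \<in> S"
  shows "(l, matched E l) \<in> E"
proof -
  obtain r where "(l, r) \<in> E" using assms unfolding perfect_matching_def by blast
  then show ?thesis using perfect_matching_matched_eq[OF assms(1)] by simp
qed

lemma perfect_matching_inj_on_matched:
  assumes "perfect_matching S T E"
  shows "inj_on (matched E) S"
  by (metis assms inj_onI perfect_matching_matched perfect_matching_right_unique)

lemma away_from_eqD: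
  "away_from r E = away_from r F \<Longrightarrow> (l, s) \<in> E \<Longrightarrow> s \<noteq> r \<Longrightarrow> (l, s) \<in> F"
  unfolding away_from_def by (metis (mono_tags, lifting) mem_Collect_eq snd_conv)

locale linked_matchings =
  fixes \<tau> :: "nat set" and d :: nat and P :: "nat \<Rightarrow> graph"
  assumes card_tau: "card \<tau> = d + 1"
    and perfect: "j \<in> \<tau> \<Longrightarrow> perfect_matching (\<tau> - {j}) {0..<d} (P j)"
    and linked_pair_exists:
      "r < d \<Longrightarrow> \<exists>a\<in>\<tau>. \<exists>b\<in>\<tau>. a \<noteq> b \<and> away_from r (P a) = away_from r (P b)"
begin

definition label :: "nat \<Rightarrow> nat \<Rightarrow> nat" where
  "label j = matched (P j)"

definition linked :: "nat \<Rightarrow> nat \<Rightarrow> nat \<Rightarrow> bool" where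
  "linked r a b \<longleftrightarrow> r < d \<and> a \<in> \<tau> \<and> b \<in> \<tau> \<and> a \<noteq> b \<and> away_from r (P a) = away_from r (P b)"

definition link_edges :: "(nat \<times> nat) set" where
  "link_edges = {(a, b). \<exists>r. linked r a b}"

definition component :: "nat \<Rightarrow> nat set" where
  "component i = {j. (i, j) \<in> link_edges\<^sup>*}"

definition closed :: "nat set \<Rightarrow> bool" where
  "closed U \<longleftrightarrow> (\<forall>r a b. linked r a b \<longrightarrow> a \<in> U \<longleftrightarrow> b \<in> U)"

definition labels_within :: "nat set \<Rightarrow> nat set" where
  "labels_within U = {r. \<exists>a\<in>U. \<exists>b\<in>U. linked r a b}"

lemma finite_tau: "finite \<tau>"
  using card_tau card.infinite by fastforce

lemma label_mem: "j \<in> \<tau> \<Longrightarrow> i \<in> \<tau> - {j} \<Longrightarrow> (i, label j i) \<in> P j"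
  unfolding label_def using perfect perfect_matching_matched by blast

lemma label_eq: "j \<in> \<tau> \<Longrightarrow> (i, r) \<in> P j \<Longrightarrow> label j i = r"
  unfolding label_def using perfect perfect_matching_matched_eq by blast

lemma label_less: "j \<in> \<tau> \<Longrightarrow> i \<in> \<tau> - {j} \<Longrightarrow> label j i < d"
  using label_mem perfect perfect_matching_edge by fastforce

lemma inj_on_label: "j \<in> \<tau> \<Longrightarrow> inj_on (label j) (\<tau> - {j})"
  unfolding label_def using perfect perfect_matching_inj_on_matched by blast

lemma linked_sym: "linked r a b \<Longrightarrow> linked r b a"
  unfolding linked_def by auto

lemma linked_label:
  assumes "linked r a b"
  shows "label a b = r"
proof (rule ccontr)
  assume "label a b \<noteq> r"
  moreover have "(b, label a b) \<in> P a"
    using assms label_mem unfolding linked_def by blast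
  ultimately have "(b, label a b) \<in> P b"
    using assms away_from_eqD unfolding linked_def by blast
  then show False
    using assms perfect perfect_matching_edge unfolding linked_def by blast
qed

lemma linked_label_eq:
  assumes "linked r a b" "q \<in> \<tau>" "q \<noteq> a" "q \<noteq> b"
  shows "label a q = label b q"
proof (cases "label a q = r")
  case True
  then have "label a q = label a b" using assms(1) linked_label by simp
  then have "q = b"
    using assms inj_on_label unfolding linked_def inj_on_def by blast
  then show ?thesis using assms(4) by simp
next
  case False
  have "(q, label a q) \<in> P a" using assms label_mem unfolding linked_def by blast
  then have "(q, label a q) \<in> P b" using assms(1) False away_from_eqD unfolding linked_def by blast
  then show ?thesis using assms(1) label_eq unfolding linked_def by metis
qed

lemma linked_in_link_edges: "linked r a b \<Longrightarrow> (a, b) \<in> link_edges"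
  unfolding link_edges_def by blast

lemma closed_tau: "closed \<tau>"
  unfolding closed_def linked_def by blast

lemma component_self: "i \<in> component i"
  unfolding component_def by simp

lemma component_subset:
  assumes "closed U" "i \<in> U"
  shows "component i \<subseteq> U"
proof
  fix j assume "j \<in> component i"
  then have "(i, j) \<in> link_edges\<^sup>*" unfolding component_def by simp
  then show "j \<in> U"
    by induction (use assms in \<open>auto simp: closed_def link_edges_def\<close>)
qed

lemma closed_component: "closed (component i)"
  unfolding closed_def component_def
  by (metis linked_in_link_edges linked_sym mem_Collect_eq rtrancl.rtrancl_into_rtrancl)

lemma closed_Diff: "closed U \<Longrightarrow> closed V \<Longrightarrow> closed (U - V)"
  unfolding closed_def by blast

lemma labels_within_less: "labels_within U \<subseteq> {0..<d}"
  unfolding labels_within_def linked_def by auto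

lemma labels_within_split:
  assumes "closed V"
  shows "labels_within U \<subseteq> labels_within (U \<inter> V) \<union> labels_within (U - V)"
  using assms unfolding labels_within_def closed_def by blast

lemma label_constant_on_component:
  assumes "j \<in> component i" "q \<in> \<tau>" "q \<notin> component i"
  shows "label j q = label i q"
proof -
  have "(i, j) \<in> link_edges\<^sup>*" using assms(1) unfolding component_def by simp
  then show ?thesis
  proof (induction rule: rtrancl_induct)
    case (step a b)
    then obtain r where r: "linked r a b" unfolding link_edges_def by blast
    have "a \<in> component i" "b \<in> component i"
      using step.hyps unfolding component_def by (auto intro: rtrancl_into_rtrancl)
    then have "label a q = label b q"
      using linked_label_eq[OF r assms(2)] assms(3) by metis
    then show ?case using step.IH by simp
  qed simp
qed

lemma card_labels_within_component:
  assumes i: "i \<in> \<tau>"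
  defines "C \<equiv> component i"
  shows "card (labels_within C) < card C"
proof -
  have C_sub: "C \<subseteq> \<tau>" unfolding C_def using component_subset[OF closed_tau i] .
  have "i \<in> C" unfolding C_def by (rule component_self)
  have outside: "\<tau> - C \<subseteq> \<tau> - {i}" using \<open>i \<in> C\<close> by blast
  have card_outside: "card (label i ` (\<tau> - C)) = d + 1 - card C"
    using card_image[OF inj_on_subset[OF inj_on_label[OF i] outside]] C_sub finite_tau
    by (simp add: card_Diff_subset finite_subset card_tau)
  have "labels_within C \<inter> label i ` (\<tau> - C) = {}"
  proof (rule ccontr)
    assume "labels_within C \<inter> label i ` (\<tau> - C) \<noteq> {}"
    then obtain r a b q where ab: "a \<in> C" "b \<in> C" "linked r a b"
      and q: "q \<in> \<tau>" "q \<notin> C" and r: "r = label i q"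
      unfolding labels_within_def by blast
    \<comment> \<open>seen from a \<in> C, q still has label r, which in P a belongs to b\<close>
    have "label a q = label a b"
      using label_constant_on_component ab q r linked_label unfolding C_def by metis
    then have "q = b"
      using inj_on_label ab(3) q ab unfolding linked_def inj_on_def by blast
    then show False using q ab by simp
  qed
  moreover have "labels_within C \<union> label i ` (\<tau> - C) \<subseteq> {0..<d}"
    using labels_within_less label_less[OF i] outside by fastforce
  ultimately have "card (labels_within C) + card (label i ` (\<tau> - C)) \<le> d"
    by (metis card_Un_disjoint card_atLeastLessThan card_mono finite_Un finite_atLeastLessThan
        finite_subset minus_nat.diff_0)
  moreover have "card C \<le> d + 1" using C_sub finite_tau card_tau card_mono by metis
  moreover have "card C > 0" using \<open>i \<in> C\<close> C_sub finite_tau card_gt_0_iff finite_subset by blast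
  ultimately show ?thesis using card_outside by linarith
qed

lemma card_labels_within_closed:
  assumes "closed U" "U \<subseteq> \<tau>" "U \<noteq> {}"
  shows "card (labels_within U) < card U"
  using assms
proof (induction "card U" arbitrary: U rule: less_induct)
  case less
  obtain i where i: "i \<in> U" using less.prems(3) by blast
  define C where "C = component i"
  have "C \<subseteq> U" unfolding C_def using component_subset[OF less.prems(1) i] .
  have "i \<in> C" unfolding C_def by (rule component_self)
  have fin: "finite U" using less.prems(2) finite_tau finite_subset by blast
  have card_U: "card U = card C + card (U - C)"
    using \<open>C \<subseteq> U\<close> fin by (metis card_Diff_subset card_mono finite_subset le_add_diff_inverse)
  have C_bound: "card (labels_within C) < card C"
    unfolding C_def using card_labels_within_component i less.prems(2) by blast
  have "card (labels_within U) \<le> card (labels_within C) + card (labels_within (U - C))"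
  proof -
    have "labels_within U \<subseteq> labels_within C \<union> labels_within (U - C)"
      using labels_within_split[OF closed_component[of i], of U] \<open>C \<subseteq> U\<close>
      unfolding C_def by (simp add: Int_absorb1)
    then show ?thesis
      by (meson card_Un_le card_mono finite_atLeastLessThan finite_subset labels_within_less
          order_trans finite_UnI)
  qed
  moreover have "card (labels_within (U - C)) \<le> card (U - C)"
  proof (cases "U - C = {}")
    case True
    show ?thesis unfolding True labels_within_def by simp
  next
    case False
    have "card (U - C) < card U" using card_U \<open>i \<in> C\<close> \<open>C \<subseteq> U\<close> fin
      by (metis card_gt_0_iff empty_iff finite_subset less_add_same_cancel2)
    then show ?thesis
      using less.hyps[of "U - C"] False less.prems closed_Diff[OF less.prems(1) closed_component]
      unfolding C_def by fastforce
  qed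
  ultimately show ?case using C_bound card_U by linarith
qed

lemma component_eq_tau:
  assumes i: "i \<in> \<tau>"
  shows "component i = \<tau>"
proof (rule ccontr)
  define C where "C = component i"
  assume "component i \<noteq> \<tau>"
  moreover have C_sub: "C \<subseteq> \<tau>" unfolding C_def using component_subset[OF closed_tau i] .
  ultimately have "\<tau> - C \<noteq> {}" unfolding C_def by blast
  have "{0..<d} \<subseteq> labels_within \<tau>"
    using linked_pair_exists unfolding labels_within_def linked_def by fastforce
  also have "\<dots> \<subseteq> labels_within C \<union> labels_within (\<tau> - C)"
    using labels_within_split[OF closed_component[of i], of \<tau>] C_sub unfolding C_def
    by (simp add: Int_absorb1)
  finally have "d \<le> card (labels_within C) + card (labels_within (\<tau> - C))"
    by (metis card_Un_le card_atLeastLessThan card_mono finite_Un finite_atLeastLessThan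
        finite_subset labels_within_less minus_nat.diff_0 order_trans)
  moreover have "card (labels_within C) < card C"
    unfolding C_def using card_labels_within_component[OF i] .
  moreover have "card (labels_within (\<tau> - C)) < card (\<tau> - C)"
    using card_labels_within_closed closed_Diff[OF closed_tau closed_component] \<open>\<tau> - C \<noteq> {}\<close>
    unfolding C_def by blast
  moreover have "card C + card (\<tau> - C) = d + 1"
    using C_sub finite_tau card_tau
    by (metis card_Diff_subset card_mono finite_subset le_add_diff_inverse)
  ultimately show False by linarith
qed


lemma linked_at_label:
  assumes "i \<in> \<tau>" "j \<in> \<tau>" "j \<noteq> i"
  shows "\<exists>b. linked (label j i) i b"
proof -
  have "(i, j) \<in> link_edges\<^sup>*"
    using component_eq_tau[OF assms(1)] assms(2) unfolding component_def by blast
  then have "j = i \<or> (\<exists>b. linked (label j i) i b)"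
  proof (induction rule: rtrancl_induct)
    case (step a c)
    then obtain r where r: "linked r a c" unfolding link_edges_def by blast
    consider "c = i" | "a = i" | "a \<noteq> i" "c \<noteq> i" by blast
    then show ?case
    proof cases
      case 2
      then show ?thesis using r linked_label[OF linked_sym[OF r]] by auto
    next
      case 3
      then show ?thesis using step.IH linked_label_eq[OF r assms(1)] by metis
    qed simp
  qed simp
  then show ?thesis using assms(3) by simp
qed

lemma linked_matchings_exchange:
  assumes "x \<in> \<tau>" "k' \<in> \<tau>" "(k, r) \<in> P x" "(x, r) \<in> P k'"
  shows "(x, r) \<in> P k"
proof -
  have k: "k \<in> \<tau> - {x}" and "x \<in> \<tau> - {k'}"
    using assms perfect perfect_matching_edge by blast+
  then obtain b where b: "linked r x b"
    using linked_at_label[of x k'] assms label_eq by fastforce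
  \<comment> \<open>the linked partner b of x carries label r in the matching of x, as does k\<close>
  have "label x b = label x k" using linked_label[OF b] label_eq assms(1,3) by simp
  then have "b = k" using inj_on_label[OF assms(1)] b k unfolding linked_def inj_on_def by blast
  then have "label k x = r" using linked_label[OF linked_sym[OF b]] by simp
  then show ?thesis using label_mem k assms(1) by fastforce
qed

end

lemma linkage_perfect_matching:
  "linkage n d M \<Longrightarrow> \<sigma> \<subseteq> {0..<n} \<Longrightarrow> card \<sigma> = d \<Longrightarrow> perfect_matching \<sigma> {0..<d} (M \<sigma>)"
  unfolding linkage_def matching_field_def by blast

lemma linkage_linked_matchings:
  assumes lk: "linkage n d M" and \<tau>: "\<tau> \<subseteq> {0..<n}" "card \<tau> = d + 1"
  shows "linked_matchings \<tau> d (\<lambda>j. M (\<tau> - {j}))"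
proof
  fix j assume "j \<in> \<tau>"
  moreover have "finite \<tau>" using \<tau>(1) finite_subset by blast
  ultimately show "perfect_matching (\<tau> - {j}) {0..<d} (M (\<tau> - {j}))"
    using linkage_perfect_matching[OF lk, of "\<tau> - {j}"] \<tau> by auto
next
  fix r assume "r < d"
  then show "\<exists>a\<in>\<tau>. \<exists>b\<in>\<tau>. a \<noteq> b \<and> away_from r (M (\<tau> - {a})) = away_from r (M (\<tau> - {b}))"
    using lk \<tau> unfolding linkage_def by auto
qed (use \<tau> in simp)

definition chow_degree :: "nat \<Rightarrow> matching_field \<Rightarrow> nat set \<Rightarrow> nat \<Rightarrow> nat" where
  "chow_degree n M \<rho> r = card {l. (l, r) \<in> chow_covector n M \<rho>}"

lemma nth_phi: "r < d \<Longrightarrow> phi n d M \<rho> ! r = chow_degree n M \<rho> r"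
  unfolding phi_def right_degree_vector_def chow_degree_def by simp

lemma chow_covector_column:
  assumes "\<sigma> \<subseteq> {0..<n}" "j \<in> \<sigma>"
  shows "{l. (l, r) \<in> chow_covector n M (({0..<n} - \<sigma>) \<union> {j})}
       = {l \<in> ({0..<n} - \<sigma>) \<union> {j}. (l, r) \<in> M (insert l (\<sigma> - {j}))}"
proof -
  have "{0..<n} - (({0..<n} - \<sigma>) \<union> {l}) = \<sigma> - {l}" for l using assms by auto
  moreover have "l \<in> ({0..<n} - \<sigma>) \<union> {j} \<Longrightarrow> insert l (\<sigma> - {l} - {j}) = insert l (\<sigma> - {j})" for l
    by auto
  ultimately show ?thesis unfolding chow_covector_def by auto
qed

lemma chow_degree_less:
  assumes lk: "linkage n d M" and \<sigma>: "\<sigma> \<subseteq> {0..<n}" "card \<sigma> = d"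
    and kr: "(k, r) \<in> M \<sigma>" and k': "k' \<in> \<sigma>" "k' \<noteq> k"
  shows "chow_degree n M (({0..<n} - \<sigma>) \<union> {k'}) r < chow_degree n M (({0..<n} - \<sigma>) \<union> {k}) r"
proof -
  have pm: "perfect_matching \<sigma> {0..<d} (M \<sigma>)" using linkage_perfect_matching[OF lk \<sigma>] .
  have k: "k \<in> \<sigma>" using perfect_matching_edge[OF pm kr] by blast
  define S where "S j = {l \<in> ({0..<n} - \<sigma>) \<union> {j}. (l, r) \<in> M (insert l (\<sigma> - {j}))}" for j
  have S_k: "k \<in> S k" using kr k unfolding S_def by (simp add: insert_absorb)
  have "finite (S k)" unfolding S_def by (rule finite_subset[of _ "insert k {0..<n}"]) auto
  have "S k' \<subseteq> S k - {k}"
  proof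
    fix l assume l: "l \<in> S k'"
    show "l \<in> S k - {k}"
    proof (cases "l = k'")
      case True
      then have "(k', r) \<in> M \<sigma>" using l k' unfolding S_def by (simp add: insert_absorb)
      then show ?thesis using perfect_matching_right_unique[OF pm kr] k' by blast
    next
      case False
      then have l_out: "l \<in> {0..<n}" "l \<notin> \<sigma>" using l unfolding S_def by auto
      define \<tau> where "\<tau> = insert l \<sigma>"
      have "finite \<sigma>" using \<sigma> finite_subset by blast
      then interpret linked_matchings \<tau> d "\<lambda>j. M (\<tau> - {j})"
        using linkage_linked_matchings[OF lk] \<sigma> l_out unfolding \<tau>_def by simp
      have "\<tau> - {l} = \<sigma>" using l_out unfolding \<tau>_def by auto
      moreover have "\<tau> - {j} = insert l (\<sigma> - {j})" if "j \<in> \<sigma>" for j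
        using l_out that unfolding \<tau>_def by auto
      ultimately have "(l, r) \<in> M (insert l (\<sigma> - {k}))"
        using linked_matchings_exchange[of l k' k r] l kr k k' unfolding S_def \<tau>_def by auto
      then show ?thesis using l_out k unfolding S_def by auto
    qed
  qed
  then have "card (S k') < card (S k)"
    by (meson S_k \<open>finite (S k)\<close> card_Diff1_less card_mono finite_Diff order_le_less_trans)
  then show ?thesis unfolding chow_degree_def S_def
    using chow_covector_column[OF \<sigma>(1) k] chow_covector_column[OF \<sigma>(1) k'(1)] by simp
qed

lemma linkage_subset_if_phi_eq:
  assumes lk: "linkage n d M" "linkage n d M'"
    and phi: "\<forall>\<rho>. \<rho> \<subseteq> {0..<n} \<and> card \<rho> = n - d + 1 \<longrightarrow> phi n d M \<rho> = phi n d M' \<rho>"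
    and \<sigma>: "\<sigma> \<subseteq> {0..<n}" "card \<sigma> = d"
  shows "M \<sigma> \<subseteq> M' \<sigma>"
proof
  fix e assume "e \<in> M \<sigma>"
  then obtain k r where e: "e = (k, r)" and kr: "(k, r) \<in> M \<sigma>" by (cases e) auto
  have pm: "perfect_matching \<sigma> {0..<d} (M \<sigma>)" "perfect_matching \<sigma> {0..<d} (M' \<sigma>)"
    using linkage_perfect_matching lk \<sigma> by blast+
  then have r: "r < d" using kr perfect_matching_edge by fastforce
  then have "\<exists>!k'. (k', r) \<in> M' \<sigma>" using pm(2) unfolding perfect_matching_def by simp
  then obtain k' where k'r: "(k', r) \<in> M' \<sigma>" by blast
  define \<rho> where "\<rho> j = ({0..<n} - \<sigma>) \<union> {j}" for j
  have same_degree: "chow_degree n M (\<rho> j) r = chow_degree n M' (\<rho> j) r" if j: "j \<in> \<sigma>" for j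
  proof -
    have "\<rho> j \<subseteq> {0..<n}" using \<sigma>(1) j unfolding \<rho>_def by blast
    moreover have "card (\<rho> j) = n - d + 1"
      using \<sigma> j finite_subset[OF \<sigma>(1)] unfolding \<rho>_def by (simp add: card_Diff_subset)
    ultimately have "phi n d M (\<rho> j) = phi n d M' (\<rho> j)" using phi by blast
    then show ?thesis using nth_phi[OF r] by metis
  qed
  show "e \<in> M' \<sigma>"
  proof (rule ccontr)
    assume "e \<notin> M' \<sigma>"
    then have "k' \<noteq> k" using e k'r by blast
    moreover have "k \<in> \<sigma>" "k' \<in> \<sigma>" using kr k'r pm perfect_matching_edge by blast+
    ultimately have "chow_degree n M (\<rho> k') r < chow_degree n M (\<rho> k) r"
      and "chow_degree n M' (\<rho> k) r < chow_degree n M' (\<rho> k') r"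
      using chow_degree_less[OF lk(1) \<sigma> kr] chow_degree_less[OF lk(2) \<sigma> k'r]
      unfolding \<rho>_def by auto
    then show False using same_degree[OF \<open>k \<in> \<sigma>\<close>] same_degree[OF \<open>k' \<in> \<sigma>\<close>] by linarith
  qed
qed

theorem theorem3p29:
  fixes n d :: nat and M M' :: matching_field
  assumes "d \<le> n"
    and "linkage n d M" and "linkage n d M'"
    and "\<forall>\<rho>. \<rho> \<subseteq> {0..<n} \<and> card \<rho> = n - d + 1 \<longrightarrow> phi n d M \<rho> = phi n d M' \<rho>"
  shows "\<forall>\<sigma>. \<sigma> \<subseteq> {0..<n} \<and> card \<sigma> = d \<longrightarrow> M \<sigma> = M' \<sigma>"
  using linkage_subset_if_phi_eq[OF assms(2,3,4)] linkage_subset_if_phi_eq[OF assms(3,2)] assms(4)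
  by (metis subset_antisym)

end
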